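(* Let $R$ be an associative ring with identity and involution $*$, and let $a\in R^{\#}\cap R^{\dagger}$. Then $a\in R^{SEP}$ if and only if $a(a^{\#})^*a^{\dagger}$ is a left $a^{\dagger}a^2$-idempotent, i.e. $(a(a^{\#})^*a^{\dagger})^2=a^{\dagger}a^2\,a(a^{\#})^*a^{\dagger}$.
   Context: An involution on $R$ is a map $x\mapsto x^*$ with $(x^* )^*=x$, $(x+y)^*=x^*+y^*$, $(xy)^*=y^*x^*$. An element $a$ is Moore–Penrose invertible if there is $b$ with $aba=a$, $bab=b$, $(ab)^*=ab$, $(ba)^*=ba$; such $b$ is unique, denoted $a^{\dagger}$, and $R^{\dagger}$ is the set of such $a$. An element $a$ is group invertible if there is $b$ with $aba=a$, $bab=b$, $ab=ba$; such $b$ is unique, denoted $a^{\#}$, and $R^{\#}$ is the set of such $a$. For $a\in R^{\#}\cap R^{\dagger}$, $a$ is SEP if $a^*=a^{\dagger}=a^{\#}$; $R^{SEP}$ denotes the set of SEP elements. For $e,c\in R$, $e$ is a left $c$-idempotent if $e^2=ce$, and a right $c$-idempotent if $e^2=ec$. *)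

theory Defs
  imports Main
begin

definition involution :: "('a::ring_1 \<Rightarrow> 'a) \<Rightarrow> bool" where
  "involution star \<longleftrightarrow> (\<forall>x. star (star x) = x) \<and> (\<forall>x y. star (x + y) = star x + star y)
     \<and> (\<forall>x y. star (x * y) = star y * star x)"

definition is_mp_inverse :: "('a::ring_1 \<Rightarrow> 'a) \<Rightarrow> 'a \<Rightarrow> 'a \<Rightarrow> bool" where
  "is_mp_inverse star a b \<longleftrightarrow> a * b * a = a \<and> b * a * b = b \<and> star (a * b) = a * b \<and> star (b * a) = b * a"

definition mp_invertible :: "('a::ring_1 \<Rightarrow> 'a) \<Rightarrow> 'a \<Rightarrow> bool" where
  "mp_invertible star a \<longleftrightarrow> (\<exists>b. is_mp_inverse star a b)"

definition mp_inv :: "('a::ring_1 \<Rightarrow> 'a) \<Rightarrow> 'a \<Rightarrow> 'a" where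
  "mp_inv star a = (THE b. is_mp_inverse star a b)"

definition is_group_inverse :: "'a::ring_1 \<Rightarrow> 'a \<Rightarrow> bool" where
  "is_group_inverse a b \<longleftrightarrow> a * b * a = a \<and> b * a * b = b \<and> a * b = b * a"

definition group_invertible :: "'a::ring_1 \<Rightarrow> bool" where
  "group_invertible a \<longleftrightarrow> (\<exists>b. is_group_inverse a b)"

definition group_inv :: "'a::ring_1 \<Rightarrow> 'a" where
  "group_inv a = (THE b. is_group_inverse a b)"

definition SEP :: "('a::ring_1 \<Rightarrow> 'a) \<Rightarrow> 'a \<Rightarrow> bool" where
  "SEP star a \<longleftrightarrow> group_invertible a \<and> mp_invertible star a
     \<and> star a = mp_inv star a \<and> mp_inv star a = group_inv a"

definition left_c_idempotent :: "'a::ring_1 \<Rightarrow> 'a \<Rightarrow> bool" where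
  "left_c_idempotent c e \<longleftrightarrow> e * e = c * e"

end

(* Let x be the group inverse and y the Moore-Penrose inverse of a, and e = a star(x) y.
   Since e = a x e, the hypothesis e e = y a a e gives y a a e = a x y a a e; the element
   w = a star(a) star(a) star(y) x x satisfies a a e w = a, so y a = a x y a = a x. Hence x is
   also a Moore-Penrose inverse of a, and y = x. The hypothesis then reduces, using
   x a star(x) = star(x) = star(x) x a, to star(x) star(x) = a star(x); applying the involution
   and multiplying by a on the left gives x = a x x = a x star(a) = star(a). Conversely,
   star(a) = x forces e = a, and both sides of the identity become a a. *)

theory Submission
  imports Defs
begin

lemma involution_star_star:
  assumes "involution star"
  shows "star (star x) = x"
  using assms unfolding involution_def by blast

lemma involution_star_mult:
  assumes "involution star"
  shows "star (x * y) = star y * star x"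
  using assms unfolding involution_def by blast

lemma is_group_inverse_unique:
  fixes a b c :: "'a::ring_1"
  assumes "is_group_inverse a b" and "is_group_inverse a c"
  shows "b = c"
proof -
  have b: "a * b * a = a" "b * a * b = b" "a * b = b * a"
    and c: "a * c * a = a" "c * a * c = c" "a * c = c * a"
    using assms unfolding is_group_inverse_def by auto
  have "a * b = (a * c * a) * b"
    using c(1) by simp
  also have "\<dots> = (a * c) * (a * b)"
    by (simp add: mult.assoc)
  also have "\<dots> = (c * a) * (b * a)"
    using b(3) c(3) by simp
  also have "\<dots> = c * (a * b * a)"
    by (simp add: mult.assoc)
  finally have ab: "a * b = a * c"
    using b(1) c(3) by simp
  have "b = b * (a * c)"
    using ab b(2) by (simp add: mult.assoc)
  also have "\<dots> = (a * c) * c"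
    using ab b(3) by (simp add: mult.assoc[symmetric])
  finally show ?thesis
    using c(2,3) by (simp add: mult.assoc)
qed

lemma is_mp_inverse_unique:
  assumes "involution star" and "is_mp_inverse star a b" and "is_mp_inverse star a c"
  shows "b = c"
proof -
  note star_mult = involution_star_mult[OF assms(1)]
  have b: "a * b * a = a" "b * a * b = b" "star (a * b) = a * b" "star (b * a) = b * a"
    and c: "a * c * a = a" "c * a * c = c" "star (a * c) = a * c" "star (c * a) = c * a"
    using assms(2,3) unfolding is_mp_inverse_def by auto
  have "a * b = star (a * c * a * b)"
    using b(3) c(1) by simp
  also have "\<dots> = star (a * b) * star (a * c)"
    by (simp add: star_mult mult.assoc)
  also have "\<dots> = (a * b * a) * c"
    using b(3) c(3) by (simp add: mult.assoc)
  finally have ab: "a * b = a * c"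
    using b(1) by simp
  have "b * a = star (b * a * c * a)"
    using b(4) c(1) by (simp add: mult.assoc)
  also have "\<dots> = star (c * a) * star (b * a)"
    by (simp add: star_mult mult.assoc)
  also have "\<dots> = c * (a * b * a)"
    using b(4) c(4) by (simp add: mult.assoc)
  finally have ba: "b * a = c * a"
    using b(1) by simp
  have "b = b * (a * c)"
    using ab b(2) by (simp add: mult.assoc)
  also have "\<dots> = c"
    using ba c(2) by (simp add: mult.assoc[symmetric])
  finally show ?thesis .
qed

lemma group_inv_eqI: "is_group_inverse a b \<Longrightarrow> group_inv a = b"
  unfolding group_inv_def using is_group_inverse_unique by blast

lemma mp_inv_eqI: "involution star \<Longrightarrow> is_mp_inverse star a b \<Longrightarrow> mp_inv star a = b"
  unfolding mp_inv_def using is_mp_inverse_unique by blast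

lemma is_group_inverse_absorb:
  assumes "is_group_inverse a x"
  shows "a * a * x = a" and "x * a * a = a" and "a * x * x = x" and "x * x * a = x"
proof -
  have "a * x * a = a" "x * a * x = x" "a * x = x * a"
    using assms unfolding is_group_inverse_def by auto
  then show "a * a * x = a" "x * a * a = a" "a * x * x = x" "x * x * a = x"
    by (metis mult.assoc)+
qed

lemma is_group_inverse_is_mp_inverse:
  assumes "is_group_inverse a x" and "star (a * x) = a * x"
  shows "is_mp_inverse star a x"
  using assms unfolding is_group_inverse_def is_mp_inverse_def by metis

lemma star_eq_group_inverse_imp_left_c_idempotent:
  assumes "involution star" and "is_group_inverse a x" and "star a = x"
  shows "left_c_idempotent (x * a ^ 2) (a * star x * x)"
proof -
  have "a * star x * x = a"
    using assms is_group_inverse_absorb(1) involution_star_star by metis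
  moreover have "x * a ^ 2 * a = a * a"
    using is_group_inverse_absorb(2)[OF assms(2)] by (simp add: power2_eq_square mult.assoc[symmetric])
  ultimately show ?thesis
    unfolding left_c_idempotent_def by simp
qed

lemma left_c_idempotent_imp_mp_inverse_eq_group_inverse:
  assumes inv: "involution star" and gx: "is_group_inverse a x" and my: "is_mp_inverse star a y"
    and idem: "left_c_idempotent (y * a ^ 2) (a * star x * y)"
  shows "y = x"
proof -
  note star_mult = involution_star_mult[OF inv]
  have g: "a * x * a = a" "a * x = x * a"
    using gx unfolding is_group_inverse_def by auto
  have m: "a * y * a = a" "star (y * a) = y * a"
    using my unfolding is_mp_inverse_def by auto
  define e where "e = a * star x * y"
  have "y * a * star a = star (a * (y * a))"
    using m(2) by (simp add: star_mult)
  then have ya_star: "y * a * star a = star a"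
    using m(1) by (simp add: mult.assoc)
  have "star x * star a * star a = star (a * a * x)"
    by (simp add: star_mult mult.assoc)
  then have x_star: "star x * star a * star a = star a"
    using is_group_inverse_absorb(1)[OF gx] by simp
  have star_ay: "star a * star y = y * a"
    using m(2) by (simp add: star_mult)
  have cancel: "a * a * e * (a * star a * star a * star y * x * x) = a"
  proof -
    have "a * a * e * (a * star a * star a * star y * x * x)
        = (a * a * a) * (star x * (y * a * star a) * star a) * star y * (x * x)"
      unfolding e_def by (simp add: mult.assoc)
    also have "\<dots> = (a * a * a) * (star x * star a * star a) * star y * (x * x)"
      unfolding ya_star ..
    also have "\<dots> = (a * a * a) * (star a * star y) * (x * x)"
      unfolding x_star by (simp add: mult.assoc)
    also have "\<dots> = a * a * (a * y * a) * x * x"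
      unfolding star_ay by (simp add: mult.assoc)
    also have "\<dots> = a"
      using m(1) is_group_inverse_absorb(1,3)[OF gx] by (simp add: mult.assoc)
    finally show ?thesis .
  qed
  have idem_e: "e * e = y * a * a * e"
    using idem unfolding left_c_idempotent_def e_def power2_eq_square by (simp add: mult.assoc)
  have "a * x * (e * e) = e * e"
    unfolding e_def using g(1) by (simp add: mult.assoc[symmetric])
  then have "y * a * a * e = a * x * y * a * a * e"
    unfolding idem_e by (simp add: mult.assoc)
  then have "y * a * a * e * (a * star a * star a * star y * x * x)
      = a * x * y * a * a * e * (a * star a * star a * star y * x * x)"
    by simp
  then have "y * a = a * x * y * a"
    using cancel by (simp add: mult.assoc)
  also have "\<dots> = a * x"
    using g m(1) by (metis mult.assoc)
  finally have "star (a * x) = a * x"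
    using m(2) by simp
  then have "is_mp_inverse star a x"
    by (rule is_group_inverse_is_mp_inverse[OF gx])
  then show ?thesis
    using inv my is_mp_inverse_unique by blast
qed

lemma left_c_idempotent_imp_star_eq_group_inverse:
  assumes inv: "involution star" and gx: "is_group_inverse a x" and ep: "star (a * x) = a * x"
    and idem: "left_c_idempotent (x * a ^ 2) (a * star x * x)"
  shows "star a = x"
proof -
  note star_mult = involution_star_mult[OF inv]
  have xa: "star (x * a) = x * a"
    using ep gx unfolding is_group_inverse_def by simp
  have "x * a * star x = star (x * x * a)"
    using xa by (simp add: star_mult mult.assoc)
  then have left: "x * a * star x = star x"
    using is_group_inverse_absorb(4)[OF gx] by simp
  have "star x * x * a = star (x * a * x)"
    using xa by (simp add: star_mult mult.assoc)
  then have right: "star x * x * a = star x"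
    using gx unfolding is_group_inverse_def by simp
  have "a * star x * star x * x = a * star x * (x * a * star x) * x"
    using left by simp
  also have "\<dots> = x * a ^ 2 * (a * star x * x)"
    using idem unfolding left_c_idempotent_def by (simp add: mult.assoc)
  also have "\<dots> = (x * a * a) * a * star x * x"
    by (simp add: power2_eq_square mult.assoc)
  also have "\<dots> = a * a * star x * x"
    using is_group_inverse_absorb(2)[OF gx] by simp
  finally have "a * star x * star x * x * a = a * a * star x * x * a"
    by simp
  then have "a * star x * star x = a * a * star x"
    using right by (simp add: mult.assoc)
  then have "x * a * star x * star x = x * a * a * star x"
    by (simp add: mult.assoc)
  then have "star x * star x = a * star x"
    using left is_group_inverse_absorb(2)[OF gx] by simp
  then have "star (star x * star x) = star (a * star x)"
    by simp
  then have "x * x = x * star a"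
    using involution_star_star[OF inv] by (simp add: star_mult)
  then have "a * x * x = star (a * a * x)"
    using ep by (simp add: star_mult mult.assoc)
  then show ?thesis
    using is_group_inverse_absorb(1,3)[OF gx] by simp
qed

theorem theorem3p2:
  fixes star :: "'a::ring_1 \<Rightarrow> 'a" and a :: 'a
  assumes "involution star"
    and "group_invertible a" and "mp_invertible star a"
  shows "SEP star a \<longleftrightarrow>
    left_c_idempotent (mp_inv star a * a ^ 2) (a * star (group_inv a) * mp_inv star a)"
proof -
  obtain x where gx: "is_group_inverse a x"
    using assms(2) unfolding group_invertible_def by blast
  obtain y where my: "is_mp_inverse star a y"
    using assms(3) unfolding mp_invertible_def by blast
  have "SEP star a \<longleftrightarrow> star a = y \<and> y = x"
    unfolding SEP_def using assms group_inv_eqI[OF gx] mp_inv_eqI[OF assms(1) my] by simp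
  also have "\<dots> \<longleftrightarrow> left_c_idempotent (y * a ^ 2) (a * star x * y)"
  proof
    assume "star a = y \<and> y = x"
    then show "left_c_idempotent (y * a ^ 2) (a * star x * y)"
      using star_eq_group_inverse_imp_left_c_idempotent[OF assms(1) gx] by simp
  next
    assume idem: "left_c_idempotent (y * a ^ 2) (a * star x * y)"
    then have "y = x"
      using left_c_idempotent_imp_mp_inverse_eq_group_inverse[OF assms(1) gx my] by blast
    moreover have "star (a * x) = a * x"
      using my \<open>y = x\<close> unfolding is_mp_inverse_def by simp
    ultimately show "star a = y \<and> y = x"
      using left_c_idempotent_imp_star_eq_group_inverse[OF assms(1) gx] idem by simp
  qed
  finally show ?thesis
    using group_inv_eqI[OF gx] mp_inv_eqI[OF assms(1) my] by simp
qed

end
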